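(* Assume (A1). Let $\varepsilon_1\ge 0$, $x\in\mathcal{C}$ and $\beta>\max\{\beta_2(x),\beta_3(x)\}$. If $\|\nabla g(x)\|\le\varepsilon_1$, then $$\|h(x)\|\le\frac{\varepsilon_1}{\beta\,\sigma_{\min}(\mathrm{D}h(x))}\le\varepsilon_1\quad\text{and}\quad \|\mathrm{grad}_{\mathcal{M}_x}f(x)\|\le\Big(1+\frac{C_\lambda(x)}{\beta\,\sigma_{\min}(\mathrm{D}h(x))}\Big)\varepsilon_1\le 2\varepsilon_1,$$ so that $x$ is an $(\varepsilon_1,2\varepsilon_1)$-approximate first-order critical point of the problem $\min f(x)$ subject to $h(x)=0$.
   Context: Let $\mathcal{E}$ be a Euclidean space with inner product $\langle\cdot,\cdot\rangle$ and norm $\|\cdot\|$ (2-norm on $\mathbb{R}^m$), and $f\colon\mathcal{E}\to\mathbb{R}$, $h\colon\mathcal{E}\to\mathbb{R}^m$ be $C^\infty$. $\mathrm{D}h(x)$ is the differential, $\mathrm{D}h(x)^*$ its adjoint, $\sigma_1(\cdot)$ and $\sigma_{\min}(\cdot)=\sigma_m(\cdot)$ the largest and $m$-th singular values. Let $\mathcal{D}=\{x:\operatorname{rank}\mathrm{D}h(x)=m\}$ and for $x\in\mathcal{D}$ let $\lambda(x)=(\mathrm{D}h(x)^* )^\dagger[\nabla f(x)]$ ($\dagger$ = Moore–Penrose pseudo-inverse); $\lambda$ is $C^\infty$ on $\mathcal{D}$. For $\beta\ge0$, Fletcher's augmented Lagrangian is $g(x)=f(x)-\langle h(x),\lambda(x)\rangle+\beta\|h(x)\|^2$.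 For $x\in\mathcal{D}$, $\mathcal{M}_x=\{y:h(y)=h(x)\}$ and $\mathrm{grad}_{\mathcal{M}_x}f(x)=\nabla f(x)-\mathrm{D}h(x)^*[\lambda(x)]$ (the orthogonal projection of $\nabla f(x)$ onto $\ker\mathrm{D}h(x)$). (A1): there are $R,\underline{\sigma}>0$ such that every $x\in\mathcal{C}=\{x:\|h(x)\|\le R\}$ satisfies $\sigma_{\min}(\mathrm{D}h(x))\ge\underline{\sigma}$ (so $\mathcal{C}\subset\mathcal{D}$). For $x\in\mathcal{C}$: $C_\lambda(x)=\|\mathrm{D}\lambda(x)\|_{\mathrm{op}}$, $\beta_2(x)=C_\lambda(x)/\sigma_{\min}(\mathrm{D}h(x))$, $\beta_3(x)=1/\sigma_{\min}(\mathrm{D}h(x))$. A point $x\in\mathcal{D}$ is an $(\varepsilon_0,\varepsilon_1)$-approximate first-order critical point if $\|h(x)\|\le\varepsilon_0$ and $\|\mathrm{grad}_{\mathcal{M}_x}f(x)\|\le\varepsilon_1$. *)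

theory Defs
  imports "HOL-Analysis.Analysis"
begin

text \<open>C-infinity smoothness on the whole space: differentiable everywhere, and every
  directional derivative map is again smooth (coinductively, to all orders).\<close>
coinductive smooth :: "('a::real_normed_vector \<Rightarrow> 'b::real_normed_vector) \<Rightarrow> bool" where
  "(\<And>x. \<phi> differentiable (at x)) \<Longrightarrow> (\<And>v. smooth (\<lambda>x. frechet_derivative \<phi> (at x) v))
     \<Longrightarrow> smooth \<phi>"

definition grad :: "('a::euclidean_space \<Rightarrow> real) \<Rightarrow> 'a \<Rightarrow> 'a" where
  "grad \<phi> x = (THE w. (\<phi> has_derivative (\<lambda>v. w \<bullet> v)) (at x))"

definition pinv :: "('a::euclidean_space \<Rightarrow> 'b::euclidean_space) \<Rightarrow> 'b \<Rightarrow> 'a" where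
  "pinv A y = (THE x. (\<forall>z. norm (A x - y) \<le> norm (A z - y)) \<and>
       (\<forall>z. (\<forall>z'. norm (A z - y) \<le> norm (A z' - y)) \<longrightarrow> norm x \<le> norm z))"

text \<open>k-th singular value (Courant-Fischer max-min characterization; 0 if k exceeds the
  dimension of the domain).\<close>
definition singular_value :: "nat \<Rightarrow> ('a::euclidean_space \<Rightarrow> 'b::euclidean_space) \<Rightarrow> real" where
  "singular_value k A =
     (if k \<le> DIM('a) then
        Sup {Inf {norm (A v) | v. v \<in> V \<and> norm v = 1} | V. subspace V \<and> dim V = k}
      else 0)"

definition sigma_min :: "('a::euclidean_space \<Rightarrow> real^'m) \<Rightarrow> real" where
  "sigma_min A = singular_value CARD('m) A"

definition Dh :: "('a::euclidean_space \<Rightarrow> real^'m) \<Rightarrow> 'a \<Rightarrow> 'a \<Rightarrow> real^'m" where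
  "Dh h x = frechet_derivative h (at x)"

definition fullrank_set :: "('a::euclidean_space \<Rightarrow> real^'m) \<Rightarrow> 'a set" where
  "fullrank_set h = {x. dim (range (Dh h x)) = CARD('m)}"

definition lam :: "('a::euclidean_space \<Rightarrow> real) \<Rightarrow> ('a \<Rightarrow> real^'m) \<Rightarrow> 'a \<Rightarrow> real^'m" where
  "lam f h x = pinv (adjoint (Dh h x)) (grad f x)"

definition fletcher :: "('a::euclidean_space \<Rightarrow> real) \<Rightarrow> ('a \<Rightarrow> real^'m) \<Rightarrow> real \<Rightarrow> 'a \<Rightarrow> real" where
  "fletcher f h \<beta> x = f x - h x \<bullet> lam f h x + \<beta> * (norm (h x))\<^sup>2"

definition gradM :: "('a::euclidean_space \<Rightarrow> real) \<Rightarrow> ('a \<Rightarrow> real^'m) \<Rightarrow> 'a \<Rightarrow> 'a" where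
  "gradM f h x = grad f x - adjoint (Dh h x) (lam f h x)"

definition C_lam :: "('a::euclidean_space \<Rightarrow> real) \<Rightarrow> ('a \<Rightarrow> real^'m) \<Rightarrow> 'a \<Rightarrow> real" where
  "C_lam f h x = onorm (frechet_derivative (lam f h) (at x))"

definition beta2 :: "('a::euclidean_space \<Rightarrow> real) \<Rightarrow> ('a \<Rightarrow> real^'m) \<Rightarrow> 'a \<Rightarrow> real" where
  "beta2 f h x = C_lam f h x / sigma_min (Dh h x)"

definition beta3 :: "('a::euclidean_space \<Rightarrow> real^'m) \<Rightarrow> 'a \<Rightarrow> real" where
  "beta3 h x = 1 / sigma_min (Dh h x)"

definition approx_crit ::
  "('a::euclidean_space \<Rightarrow> real) \<Rightarrow> ('a \<Rightarrow> real^'m) \<Rightarrow> real \<Rightarrow> real \<Rightarrow> 'a \<Rightarrow> bool" where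
  "approx_crit f h \<epsilon>0 \<epsilon>1 x \<longleftrightarrow>
     x \<in> fullrank_set h \<and> norm (h x) \<le> \<epsilon>0 \<and> norm (gradM f h x) \<le> \<epsilon>1"

end

theory Submission
  imports Defs
begin

(* Write A = Dh h x. Differentiating Fletcher's Lagrangian gives
     grad g(x) = gradM f(x) - D\<lambda>(x)^* h(x) + 2\<beta> A^* h(x),
   and gradM f(x) lies in the kernel of A, hence is orthogonal to A^* h(x). By Pythagoras both
   |gradM f(x)| and 2\<beta> |A^* h(x)| are at most |grad g(x) + D\<lambda>(x)^* h(x)| \<le> \<epsilon>1 + C_\<lambda> |h(x)|.
   Since |A^* h(x)| \<ge> \<sigma>_min |h(x)| and \<beta> \<sigma>_min exceeds both 1 and C_\<lambda>, the two estimates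
   follow. That \<lambda> is differentiable at all comes from Cramer's rule: \<lambda>(y) solves the normal
   equations Dh(y) Dh(y)^* \<lambda> = Dh(y) grad f(y), whose coefficients are differentiable and
   whose matrix stays invertible near x. *)

lemma subspace_ex_unit_norm_image_le_adjoint:
  fixes A :: "'a::euclidean_space \<Rightarrow> 'b::euclidean_space"
  assumes lin: "linear A" and V: "subspace V" "dim V = DIM('b)" and "u \<noteq> 0"
  shows "\<exists>v\<in>V. norm v = 1 \<and> norm (A v) * norm u \<le> norm (adjoint A u)"
proof (cases "inj_on A V")
  case False
  then obtain a b where "a \<in> V" "b \<in> V" "a \<noteq> b" "A a = A b"
    unfolding inj_on_def by blast
  then have w: "a - b \<in> V" "a - b \<noteq> 0" "A (a - b) = 0"
    using V(1) lin by (auto simp: subspace_diff linear_diff)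
  show ?thesis
    using w V(1) lin by (intro bexI[of _ "(a - b) /\<^sub>R norm (a - b)"]) (auto simp: subspace_scale linear_scale)
next
  case True
  have "inj_on A (span V)" using True V(1) by (metis span_eq_iff)
  then have "dim (A ` V) = DIM('b)"
    using dim_image_eq[OF lin] V(2) by simp
  then have "A ` V = UNIV"
    using V(1) lin by (metis dim_eq_full linear_subspace_image span_eq_iff)
  then obtain v where v: "v \<in> V" "A v = u" by (metis UNIV_I imageE)
  then have "v \<noteq> 0" using \<open>u \<noteq> 0\<close> lin linear_0 by blast
  have "norm u * norm u = adjoint A u \<bullet> v"
    using v adjoint_works[OF lin, of v u] by (simp add: inner_commute flip: power2_eq_square power2_norm_eq_inner)
  also have "\<dots> \<le> norm (adjoint A u) * norm v" by (rule norm_cauchy_schwarz)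
  finally have "norm (A (v /\<^sub>R norm v)) * norm u \<le> norm (adjoint A u)"
    using v \<open>v \<noteq> 0\<close> lin by (simp add: linear_scale field_simps)
  then show ?thesis
    using v V(1) \<open>v \<noteq> 0\<close> by (intro bexI[of _ "v /\<^sub>R norm v"]) (auto simp: subspace_scale)
qed

lemma singular_value_le_norm_adjoint:
  fixes A :: "'a::euclidean_space \<Rightarrow> 'b::euclidean_space"
  assumes lin: "linear A"
  shows "singular_value DIM('b) A * norm u \<le> norm (adjoint A u)"
proof (cases "DIM('b) \<le> DIM('a) \<and> u \<noteq> 0")
  case True
  let ?S = "{Inf {norm (A v) | v. v \<in> V \<and> norm v = 1} | V. subspace V \<and> dim V = DIM('b)}"
  obtain V0 :: "'a set" where "subspace V0" "dim V0 = DIM('b)"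
    using True choose_subspace_of_subspace[of "DIM('b)" "UNIV::'a set"] by auto
  then have "?S \<noteq> {}" by blast
  then have "Sup ?S \<le> norm (adjoint A u) / norm u"
  proof (rule cSup_least)
    fix s assume "s \<in> ?S"
    then obtain V where V: "subspace V" "dim V = DIM('b)"
      and s: "s = Inf {norm (A v) | v. v \<in> V \<and> norm v = 1}" by blast
    obtain v where "v \<in> V" "norm v = 1" "norm (A v) * norm u \<le> norm (adjoint A u)"
      using subspace_ex_unit_norm_image_le_adjoint[OF lin V] True by blast
    then show "s \<le> norm (adjoint A u) / norm u"
      unfolding s using True
      by (intro cInf_lower2[of "norm (A v)"]) (auto intro: bdd_belowI[of _ 0] simp: pos_le_divide_eq)
  qed
  then show ?thesis
    using True by (simp add: singular_value_def pos_le_divide_eq)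
qed (auto simp: singular_value_def)

lemma sigma_min_le_norm_adjoint:
  fixes A :: "'a::euclidean_space \<Rightarrow> real^'m"
  assumes "linear A"
  shows "sigma_min A * norm u \<le> norm (adjoint A u)"
  using singular_value_le_norm_adjoint[OF assms] by (simp add: sigma_min_def)

lemma inj_adjoint_if_sigma_min_pos:
  fixes A :: "'a::euclidean_space \<Rightarrow> real^'m"
  assumes lin: "linear A" and pos: "sigma_min A > 0"
  shows "inj (adjoint A)"
proof -
  have "u = 0" if "adjoint A u = 0" for u
    using sigma_min_le_norm_adjoint[OF lin, of u] pos that by (simp add: mult_le_0_iff)
  then show ?thesis
    using adjoint_linear[OF lin] by (simp add: linear_injective_0)
qed

lemma norm_adjoint_le_onorm:
  fixes D :: "'a::euclidean_space \<Rightarrow> 'b::euclidean_space"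
  assumes "bounded_linear D"
  shows "norm (adjoint D u) \<le> onorm D * norm u"
proof (cases "adjoint D u = 0")
  case False
  have "norm (adjoint D u) * norm (adjoint D u) = D (adjoint D u) \<bullet> u"
    using adjoint_works[OF bounded_linear.linear[OF assms], of "adjoint D u" u]
    by (simp flip: power2_eq_square power2_norm_eq_inner)
  also have "\<dots> \<le> norm (D (adjoint D u)) * norm u"
    by (rule norm_cauchy_schwarz)
  also have "\<dots> \<le> onorm D * norm (adjoint D u) * norm u"
    using assms by (intro mult_right_mono onorm) auto
  finally show ?thesis
    using False by (simp add: mult.commute mult.left_commute)
qed (simp add: assms onorm_pos_le)

lemma pinv_eqI:
  fixes B :: "'a::euclidean_space \<Rightarrow> 'b::euclidean_space"
  assumes lin: "linear B" and inj: "inj B" and orth: "\<And>w. (B l - g) \<bullet> B w = 0"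
  shows "pinv B g = l"
  unfolding pinv_def
proof (rule the_equality)
  have pythagoras: "(norm (B z - g))\<^sup>2 = (norm (B (z - l)))\<^sup>2 + (norm (B l - g))\<^sup>2" for z
  proof -
    have "orthogonal (B (z - l)) (B l - g)"
      using orth[of "z - l"] by (simp add: orthogonal_def inner_commute)
    moreover have "B z - g = B (z - l) + (B l - g)"
      using lin by (simp add: linear_diff)
    ultimately show ?thesis by (simp only: norm_add_Pythagorean)
  qed
  have minimal: "norm (B l - g) \<le> norm (B z - g)" for z
    by (rule power2_le_imp_le) (simp_all add: pythagoras[of z])
  have minimizer_unique: "z = l" if "norm (B z - g) \<le> norm (B l - g)" for z
  proof -
    have "(norm (B z - g))\<^sup>2 \<le> (norm (B l - g))\<^sup>2" using that by (simp add: power_mono)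
    then have "B (z - l) = 0" using pythagoras[of z] by simp
    then show ?thesis using lin inj by (simp add: linear_diff inj_eq)
  qed
  show "(\<forall>z. norm (B l - g) \<le> norm (B z - g)) \<and>
      (\<forall>z. (\<forall>z'. norm (B z - g) \<le> norm (B z' - g)) \<longrightarrow> norm l \<le> norm z)"
    using minimal minimizer_unique by blast
  show "z = l" if "(\<forall>z'. norm (B z - g) \<le> norm (B z' - g)) \<and>
      (\<forall>z'. (\<forall>z''. norm (B z' - g) \<le> norm (B z'' - g)) \<longrightarrow> norm z \<le> norm z')" for z
    using that minimizer_unique by blast
qed

lemma pinv_residual_orthogonal:
  fixes B :: "'a::euclidean_space \<Rightarrow> 'b::euclidean_space"
  assumes lin: "linear B" and inj: "inj B"
  shows "(B (pinv B g) - g) \<bullet> B w = 0"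
proof -
  have span_range: "span (range B) = range B"
    using lin by (simp add: linear_subspace_image)
  obtain p q where "p \<in> span (range B)" and q: "\<And>w. w \<in> span (range B) \<Longrightarrow> orthogonal q w"
    and g: "g = p + q"
    using orthogonal_subspace_decomp_exists by metis
  then obtain l where l: "B l = p" using span_range by auto
  have res_orth: "(B l - g) \<bullet> B w = 0" for w
    using q[of "B w"] span_range by (simp add: g l orthogonal_def)
  then have "pinv B g = l" by (rule pinv_eqI[OF lin inj])
  with res_orth show ?thesis by simp
qed

lemma pinv_adjoint_normal_equation:
  fixes A :: "'a::euclidean_space \<Rightarrow> 'b::euclidean_space"
  assumes lin: "linear A" and inj: "inj (adjoint A)"
  shows "A (adjoint A (pinv (adjoint A) g)) = A g"
proof -
  let ?r = "adjoint A (pinv (adjoint A) g) - g"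
  have "A ?r \<bullet> w = 0" for w
    using pinv_residual_orthogonal[OF adjoint_linear[OF lin] inj, of g w]
    by (simp add: adjoint_works[OF lin])
  then have "A ?r = 0"
    by (metis inner_eq_zero_iff)
  then show ?thesis
    using lin by (simp add: linear_diff)
qed

lemma inj_comp_adjoint:
  fixes A :: "'a::euclidean_space \<Rightarrow> 'b::euclidean_space"
  assumes lin: "linear A" and inj: "inj (adjoint A)"
  shows "inj (A \<circ> adjoint A)"
proof -
  have "u = 0" if "A (adjoint A u) = 0" for u
  proof -
    have "adjoint A u \<bullet> adjoint A u = 0"
      using that by (simp add: adjoint_works[OF lin])
    then show ?thesis
      using inj adjoint_linear[OF lin] by (simp add: linear_injective_0)
  qed
  then show ?thesis
    using lin adjoint_linear[OF lin] by (simp add: linear_compose linear_injective_0)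
qed

lemma smooth_differentiable: "smooth \<phi> \<Longrightarrow> \<phi> differentiable (at x)"
  by (auto elim: smooth.cases)

lemma smooth_frechet_derivative:
  "smooth \<phi> \<Longrightarrow> smooth (\<lambda>x. frechet_derivative \<phi> (at x) v)"
  by (auto elim: smooth.cases)

lemma grad_eqI:
  assumes "(g has_derivative (\<lambda>v. w \<bullet> v)) (at x)"
  shows "grad g x = w"
  unfolding grad_def
proof (rule the_equality)
  fix w' assume "(g has_derivative (\<lambda>v. w' \<bullet> v)) (at x)"
  then have "(\<lambda>v. w' \<bullet> v) = (\<lambda>v. w \<bullet> v)"
    using assms has_derivative_unique by blast
  then show "w' = w" by (metis euclidean_eqI)
qed (rule assms)

lemma has_derivative_inner_adjoint_one:
  fixes f :: "'a::euclidean_space \<Rightarrow> real"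
  assumes "(f has_derivative D) (at x)"
  shows "(f has_derivative (\<lambda>v. adjoint D 1 \<bullet> v)) (at x)"
proof -
  have "D = (\<lambda>v. adjoint D 1 \<bullet> v)"
    using adjoint_works[OF has_derivative_linear[OF assms], of _ 1] by (auto simp: inner_commute)
  then show ?thesis using assms by simp
qed

lemma grad_eq_adjoint:
  fixes f :: "'a::euclidean_space \<Rightarrow> real"
  assumes "f differentiable (at x)"
  shows "grad f x = adjoint (frechet_derivative f (at x)) 1"
  using assms by (intro grad_eqI has_derivative_inner_adjoint_one) (simp add: frechet_derivative_works)

lemma has_derivative_grad:
  fixes f :: "'a::euclidean_space \<Rightarrow> real"
  assumes "f differentiable (at x)"
  shows "(f has_derivative (\<lambda>v. grad f x \<bullet> v)) (at x)"
  using assms has_derivative_inner_adjoint_one[of f _ x]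
  by (simp add: grad_eq_adjoint frechet_derivative_works)

lemma adjoint_eq_sum_Basis:
  fixes F :: "'a::euclidean_space \<Rightarrow> 'b::euclidean_space"
  assumes "linear F"
  shows "adjoint F u = (\<Sum>j\<in>Basis. (F j \<bullet> u) *\<^sub>R j)"
  using adjoint_works[OF assms] euclidean_representation[of "adjoint F u"]
  by (simp add: inner_commute)

lemma differentiable_linear_family_apply:
  fixes F :: "'a::real_normed_vector \<Rightarrow> 'b::euclidean_space \<Rightarrow> 'c::real_normed_vector"
  assumes "\<And>y. linear (F y)" and "\<And>v. (\<lambda>y. F y v) differentiable (at x)"
    and "g differentiable (at x)"
  shows "(\<lambda>y. F y (g y)) differentiable (at x)"
proof -
  have "F y (g y) = (\<Sum>i\<in>Basis. (g y \<bullet> i) *\<^sub>R F y i)" for y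
  proof -
    have "F y (g y) = F y (\<Sum>i\<in>Basis. (g y \<bullet> i) *\<^sub>R i)"
      by (simp add: euclidean_representation)
    also have "\<dots> = (\<Sum>i\<in>Basis. (g y \<bullet> i) *\<^sub>R F y i)"
      using assms(1)[of y] by (simp add: linear_sum linear_scale)
    finally show ?thesis .
  qed
  then show ?thesis
    using assms(2,3) by simp
qed

lemma differentiable_linear_family_adjoint:
  fixes F :: "'a::real_normed_vector \<Rightarrow> 'b::euclidean_space \<Rightarrow> 'c::euclidean_space"
  assumes "\<And>y. linear (F y)" and "\<And>v. (\<lambda>y. F y v) differentiable (at x)"
  shows "(\<lambda>y. adjoint (F y) u) differentiable (at x)"
  using assms by (simp add: adjoint_eq_sum_Basis)

lemma differentiable_det:
  fixes A :: "'a::real_normed_vector \<Rightarrow> real^'n^'n"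
  assumes "\<And>i j. (\<lambda>y. A y $ i $ j) differentiable (at x)"
  shows "(\<lambda>y. det (A y)) differentiable (at x)"
proof -
  obtain D where D: "\<And>i j. ((\<lambda>y. A y $ i $ j) has_derivative D i j) (at x)"
    using assms unfolding differentiable_def by metis
  have "(\<lambda>y. \<Prod>i\<in>UNIV. A y $ i $ p i) differentiable (at x)" for p :: "'n \<Rightarrow> 'n"
    unfolding differentiable_def by (rule exI, rule has_derivative_prod, rule D)
  then have "(\<lambda>y. of_int (sign p) * (\<Prod>i\<in>UNIV. A y $ i $ p i)) differentiable (at x)" for p :: "'n \<Rightarrow> 'n"
    by (rule differentiable_mult[OF differentiable_const])
  then have "(\<lambda>y. \<Sum>p\<in>{p. p permutes UNIV}. of_int (sign p) * (\<Prod>i\<in>UNIV. A y $ i $ p i)) differentiable (at x)"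
    by (rule differentiable_sum[rule_format, OF finite_permutations[OF finite_class.finite_UNIV]])
  then show ?thesis
    unfolding det_def .
qed

lemma differentiable_vec_lambda:
  fixes \<phi> :: "'n::finite \<Rightarrow> 'a::real_normed_vector \<Rightarrow> real"
  assumes "\<And>k. \<phi> k differentiable (at x)"
  shows "(\<lambda>y. \<chi> k. \<phi> k y) differentiable (at x)"
proof -
  have "(\<lambda>y. (\<chi> k. \<phi> k y) \<bullet> axis i 1) differentiable (at x)" for i
    using assms by (simp add: inner_axis)
  then show ?thesis
    by (subst differentiable_componentwise_within) (auto simp: Basis_vec_def)
qed

lemma differentiable_vec_nth:
  "f differentiable (at x) \<Longrightarrow> (\<lambda>y. f y $ i) differentiable (at x)"
  using differentiable_chain_at[OF _ bounded_linear_imp_differentiable[OF bounded_linear_vec_nth]]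
  by (simp add: o_def)

lemma differentiable_linear_system_solution:
  fixes M :: "'a::real_normed_vector \<Rightarrow> real^'n \<Rightarrow> real^'n" and b l :: "'a \<Rightarrow> real^'n"
  assumes lin: "\<And>y. linear (M y)" and dM: "\<And>v. (\<lambda>y. M y v) differentiable (at x)"
    and db: "b differentiable (at x)"
    and inj: "inj (M x)" and solves: "\<And>y. inj (M y) \<Longrightarrow> M y (l y) = b y"
  shows "l differentiable (at x)"
proof -
  define A where "A y = matrix (M y)" for y
  define cramer_sol where
    "cramer_sol y = (\<chi> k. det (\<chi> i j. if j = k then b y $ i else A y $ i $ j) / det (A y))" for y
  have dA: "(\<lambda>y. A y $ i $ j) differentiable (at x)" for i j
    using differentiable_vec_nth[OF dM[of "axis j 1"]] by (simp add: A_def matrix_def)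
  have d_det: "(\<lambda>y. det (A y)) differentiable (at x)"
    by (rule differentiable_det[OF dA])
  have d_num: "(\<lambda>y. det (\<chi> i j. if j = k then b y $ i else A y $ i $ j)) differentiable (at x)" for k
  proof (rule differentiable_det)
    fix i j
    show "(\<lambda>y. (\<chi> i j. if j = k then b y $ i else A y $ i $ j) $ i $ j) differentiable (at x)"
      by (cases "j = k") (simp_all add: dA differentiable_vec_nth[OF db])
  qed
  have det_x: "det (A x) \<noteq> 0"
    using inj lin by (simp add: A_def det_nz_iff_inj)
  have d_sol: "cramer_sol differentiable (at x)"
    unfolding cramer_sol_def by (intro differentiable_vec_lambda differentiable_divide d_num d_det det_x)
  have "cramer_sol y = l y" if "det (A y) \<noteq> 0" for y
  proof -
    have "inj (M y)" using that lin by (simp add: A_def det_nz_iff_inj)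
    then have "A y *v l y = b y" using solves lin by (simp add: A_def matrix_works)
    then show ?thesis using cramer[OF that] by (simp add: cramer_sol_def)
  qed
  moreover have "\<forall>\<^sub>F y in at x. det (A y) \<noteq> 0"
    using differentiable_imp_continuous_within[OF d_det] det_x
    by (simp add: continuous_at tendsto_imp_eventually_ne)
  ultimately have "\<forall>\<^sub>F y in at x. cramer_sol y = l y" "cramer_sol x = l x"
    using det_x by (auto elim: eventually_mono)
  then show ?thesis
    using d_sol has_derivative_transform_eventually[of cramer_sol _ x UNIV l]
    unfolding differentiable_def by blast
qed

lemma linear_Dh:
  "h differentiable (at x) \<Longrightarrow> linear (Dh h x)"
  by (simp add: Dh_def frechet_derivative_works has_derivative_linear)

lemma Dh_gradM:
  fixes f :: "'a::euclidean_space \<Rightarrow> real" and h :: "'a \<Rightarrow> real^'m"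
  assumes "h differentiable (at x)" and "inj (adjoint (Dh h x))"
  shows "Dh h x (gradM f h x) = 0"
  using pinv_adjoint_normal_equation[OF linear_Dh[OF assms(1)] assms(2)] linear_Dh[OF assms(1)]
  by (simp add: gradM_def lam_def linear_diff)

lemma lam_differentiable:
  fixes f :: "'a::euclidean_space \<Rightarrow> real" and h :: "'a \<Rightarrow> real^'m"
  assumes f: "smooth f" and h: "smooth h" and inj: "inj (adjoint (Dh h x))"
  shows "lam f h differentiable (at x)"
proof (rule differentiable_linear_system_solution
    [where M = "\<lambda>y. Dh h y \<circ> adjoint (Dh h y)" and b = "\<lambda>y. Dh h y (grad f y)"])
  have lin: "linear (Dh h y)" for y
    using linear_Dh[OF smooth_differentiable[OF h]] .
  have dDh: "(\<lambda>y. Dh h y v) differentiable (at x)" for v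
    unfolding Dh_def by (rule smooth_differentiable[OF smooth_frechet_derivative[OF h]])
  have d_adjoint: "(\<lambda>y. adjoint (Dh h y) u) differentiable (at x)" for u
    by (rule differentiable_linear_family_adjoint[OF lin dDh])
  have d_grad: "(\<lambda>y. grad f y) differentiable (at x)"
  proof -
    have "linear (frechet_derivative f (at y))" for y
      using smooth_differentiable[OF f, of y] frechet_derivative_works has_derivative_linear by blast
    moreover have "(\<lambda>y. frechet_derivative f (at y) v) differentiable (at x)" for v
      by (rule smooth_differentiable[OF smooth_frechet_derivative[OF f]])
    ultimately have "(\<lambda>y. adjoint (frechet_derivative f (at y)) 1) differentiable (at x)"
      by (rule differentiable_linear_family_adjoint)
    then show ?thesis
      using smooth_differentiable[OF f] by (simp add: grad_eq_adjoint)
  qed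
  show "linear (Dh h y \<circ> adjoint (Dh h y))" for y
    using lin by (simp add: linear_compose adjoint_linear)
  show "(\<lambda>y. (Dh h y \<circ> adjoint (Dh h y)) v) differentiable (at x)" for v
    using differentiable_linear_family_apply[OF lin dDh d_adjoint] by simp
  show "(\<lambda>y. Dh h y (grad f y)) differentiable (at x)"
    by (rule differentiable_linear_family_apply[OF lin dDh d_grad])
  show "inj (Dh h x \<circ> adjoint (Dh h x))"
    by (rule inj_comp_adjoint[OF lin inj])
  show "(Dh h y \<circ> adjoint (Dh h y)) (lam f h y) = Dh h y (grad f y)"
    if "inj (Dh h y \<circ> adjoint (Dh h y))" for y
    using pinv_adjoint_normal_equation[OF lin inj_on_imageI2[OF that]] by (simp add: lam_def)
qed

lemma grad_fletcher:
  fixes f :: "'a::euclidean_space \<Rightarrow> real" and h :: "'a \<Rightarrow> real^'m"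
  assumes df: "f differentiable (at x)" and dh: "h differentiable (at x)"
    and dl: "lam f h differentiable (at x)"
  shows "grad (fletcher f h \<beta>) x = gradM f h x
    - adjoint (frechet_derivative (lam f h) (at x)) (h x) + (2 * \<beta>) *\<^sub>R adjoint (Dh h x) (h x)"
proof (rule grad_eqI)
  define A where "A = Dh h x"
  define Dl where "Dl = frechet_derivative (lam f h) (at x)"
  have hA: "(h has_derivative A) (at x)" and lD: "(lam f h has_derivative Dl) (at x)"
    using dh dl by (simp_all add: A_def Dh_def Dl_def frechet_derivative_works)
  have fletcher_eq: "fletcher f h \<beta> = (\<lambda>y. f y - h y \<bullet> lam f h y + \<beta> * (h y \<bullet> h y))"
    by (simp add: fun_eq_iff fletcher_def power2_norm_eq_inner)
  have "(fletcher f h \<beta> has_derivative (\<lambda>v. grad f x \<bullet> v - (h x \<bullet> Dl v + A v \<bullet> lam f h x)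
      + \<beta> * (h x \<bullet> A v + A v \<bullet> h x))) (at x)"
    unfolding fletcher_eq
    by (intro has_derivative_add has_derivative_diff has_derivative_inner has_derivative_mult_right
        has_derivative_grad df hA lD)
  moreover have "grad f x \<bullet> v - (h x \<bullet> Dl v + A v \<bullet> lam f h x) + \<beta> * (h x \<bullet> A v + A v \<bullet> h x)
      = (gradM f h x - adjoint Dl (h x) + (2 * \<beta>) *\<^sub>R adjoint A (h x)) \<bullet> v" for v
    using adjoint_works[OF has_derivative_linear[OF hA]] adjoint_works[OF has_derivative_linear[OF lD]]
    by (simp add: gradM_def A_def inner_commute algebra_simps)
  ultimately show "(fletcher f h \<beta> has_derivative
      (\<lambda>v. (gradM f h x - adjoint Dl (h x) + (2 * \<beta>) *\<^sub>R adjoint A (h x)) \<bullet> v)) (at x)"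
    by simp
qed

lemma penalized_gradient_bounds:
  fixes g p q w :: "'a::real_inner"
  assumes w: "w = g - q + (2 * \<beta>) *\<^sub>R p" and orth: "g \<bullet> p = 0"
    and q: "norm q \<le> C * r" and p: "\<sigma> * r \<le> norm p"
    and "0 \<le> \<beta>" "0 \<le> r" "C \<le> \<beta> * \<sigma>"
  shows "\<beta> * \<sigma> * r \<le> norm w" and "norm g \<le> norm w + C * r"
proof -
  have pythagoras: "(norm (w + q))\<^sup>2 = (norm g)\<^sup>2 + (norm ((2 * \<beta>) *\<^sub>R p))\<^sup>2"
    using orth by (simp add: w norm_add_Pythagorean orthogonal_def)
  have "norm (w + q) \<le> norm w + C * r"
    using q norm_triangle_ineq[of w q] by linarith
  moreover have "norm g \<le> norm (w + q)"
    by (rule power2_le_imp_le) (simp_all add: pythagoras)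
  moreover have "norm ((2 * \<beta>) *\<^sub>R p) \<le> norm (w + q)"
    by (rule power2_le_imp_le) (simp_all add: pythagoras)
  moreover have "2 * (\<beta> * \<sigma> * r) \<le> norm ((2 * \<beta>) *\<^sub>R p)"
    using mult_left_mono[OF p, of "2 * \<beta>"] \<open>0 \<le> \<beta>\<close> by (simp add: mult.assoc)
  moreover have "C * r \<le> \<beta> * \<sigma> * r"
    using \<open>C \<le> \<beta> * \<sigma>\<close> \<open>0 \<le> r\<close> by (rule mult_right_mono)
  ultimately show "\<beta> * \<sigma> * r \<le> norm w" and "norm g \<le> norm w + C * r"
    by linarith+
qed

lemma C_lam_nonneg:
  fixes f :: "'a::euclidean_space \<Rightarrow> real" and h :: "'a \<Rightarrow> real^'m"
  assumes f: "smooth f" and h: "smooth h" and "sigma_min (Dh h x) > 0"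
  shows "C_lam f h x \<ge> 0"
proof -
  have "inj (adjoint (Dh h x))"
    using inj_adjoint_if_sigma_min_pos linear_Dh[OF smooth_differentiable[OF h]] assms(3) by blast
  then have "lam f h differentiable (at x)"
    by (rule lam_differentiable[OF f h])
  then show ?thesis
    unfolding C_lam_def frechet_derivative_works by (intro onorm_pos_le has_derivative_bounded_linear)
qed

lemma fletcher_stationarity_bounds:
  fixes f :: "'a::euclidean_space \<Rightarrow> real" and h :: "'a \<Rightarrow> real^'m"
  assumes f: "smooth f" and h: "smooth h" and \<sigma>_pos: "sigma_min (Dh h x) > 0"
    and "0 \<le> \<beta>" and "C_lam f h x \<le> \<beta> * sigma_min (Dh h x)"
  shows "\<beta> * sigma_min (Dh h x) * norm (h x) \<le> norm (grad (fletcher f h \<beta>) x)"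
    and "norm (gradM f h x) \<le> norm (grad (fletcher f h \<beta>) x) + C_lam f h x * norm (h x)"
    and "x \<in> fullrank_set h"
proof -
  define A where "A = Dh h x"
  define Dl where "Dl = frechet_derivative (lam f h) (at x)"
  have dh: "h differentiable (at x)" by (rule smooth_differentiable[OF h])
  have linA: "linear A" unfolding A_def by (rule linear_Dh[OF dh])
  have adjoint_lower: "sigma_min A * norm u \<le> norm (adjoint A u)" for u
    by (rule sigma_min_le_norm_adjoint[OF linA])
  have inj: "inj (adjoint A)"
    using inj_adjoint_if_sigma_min_pos[OF linA] \<sigma>_pos by (simp add: A_def)
  have dl: "lam f h differentiable (at x)"
    using lam_differentiable[OF f h] inj by (simp add: A_def)
  have "gradM f h x \<bullet> adjoint A (h x) = 0"
    using Dh_gradM[OF dh, of f] inj adjoint_works[OF linA, of "gradM f h x" "h x"]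
    by (simp add: A_def)
  moreover have "norm (adjoint Dl (h x)) \<le> C_lam f h x * norm (h x)"
    using dl has_derivative_bounded_linear norm_adjoint_le_onorm
    unfolding C_lam_def Dl_def frechet_derivative_works by blast
  moreover have "grad (fletcher f h \<beta>) x = gradM f h x - adjoint Dl (h x) + (2 * \<beta>) *\<^sub>R adjoint A (h x)"
    unfolding A_def Dl_def by (rule grad_fletcher[OF smooth_differentiable[OF f] dh dl])
  ultimately show "\<beta> * sigma_min (Dh h x) * norm (h x) \<le> norm (grad (fletcher f h \<beta>) x)"
    and "norm (gradM f h x) \<le> norm (grad (fletcher f h \<beta>) x) + C_lam f h x * norm (h x)"
    using penalized_gradient_bounds[OF _ _ _ adjoint_lower] assms(4,5) by (simp_all add: A_def)
  show "x \<in> fullrank_set h"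
    using inj linA by (simp add: fullrank_set_def A_def)
qed

theorem mainTheorem2:
  fixes f :: "'a::euclidean_space \<Rightarrow> real" and h :: "'a \<Rightarrow> real^'m"
    and R sig \<epsilon>1 \<beta> :: real and x :: 'a
  assumes f_smooth: "smooth f" and h_smooth: "smooth h"
    and A1: "R > 0" "sig > 0" "\<forall>y. norm (h y) \<le> R \<longrightarrow> sigma_min (Dh h y) \<ge> sig"
    and eps: "\<epsilon>1 \<ge> 0"
    and xC: "norm (h x) \<le> R"
    and beta: "\<beta> > max (beta2 f h x) (beta3 h x)"
    and small: "norm (grad (fletcher f h \<beta>) x) \<le> \<epsilon>1"
  shows "norm (h x) \<le> \<epsilon>1 / (\<beta> * sigma_min (Dh h x))
    \<and> \<epsilon>1 / (\<beta> * sigma_min (Dh h x)) \<le> \<epsilon>1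
    \<and> norm (gradM f h x) \<le> (1 + C_lam f h x / (\<beta> * sigma_min (Dh h x))) * \<epsilon>1
    \<and> (1 + C_lam f h x / (\<beta> * sigma_min (Dh h x))) * \<epsilon>1 \<le> 2 * \<epsilon>1
    \<and> approx_crit f h \<epsilon>1 (2 * \<epsilon>1) x"
proof -
  define \<sigma> where "\<sigma> = sigma_min (Dh h x)"
  define C where "C = C_lam f h x"
  have \<sigma>_pos: "\<sigma> > 0" using A1 xC by (force simp: \<sigma>_def)
  have "\<beta> * \<sigma> > 1" and "\<beta> * \<sigma> > C"
    using beta \<sigma>_pos by (simp_all add: beta2_def beta3_def C_def \<sigma>_def field_simps)
  then have "\<beta> \<ge> 0" using zero_less_mult_pos2[of \<beta> \<sigma>] \<sigma>_pos by simp
  have C_nonneg: "C \<ge> 0"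
    using C_lam_nonneg[OF f_smooth h_smooth] \<sigma>_pos by (simp add: C_def \<sigma>_def)
  have h_bound: "\<beta> * \<sigma> * norm (h x) \<le> \<epsilon>1" and gradM_bound: "norm (gradM f h x) \<le> \<epsilon>1 + C * norm (h x)"
    and "x \<in> fullrank_set h"
    using fletcher_stationarity_bounds[OF f_smooth h_smooth, of x \<beta>] small \<sigma>_pos \<open>\<beta> \<ge> 0\<close> \<open>\<beta> * \<sigma> > C\<close>
    by (simp_all add: \<sigma>_def C_def)
  have h_le: "norm (h x) \<le> \<epsilon>1 / (\<beta> * \<sigma>)"
    using h_bound \<open>\<beta> * \<sigma> > 1\<close> by (simp add: pos_le_divide_eq mult.commute)
  moreover have "\<epsilon>1 / (\<beta> * \<sigma>) \<le> \<epsilon>1"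
    using eps \<open>\<beta> * \<sigma> > 1\<close> by (simp add: divide_le_eq mult_le_cancel_left1 mult.commute)
  moreover have "C * norm (h x) \<le> C / (\<beta> * \<sigma>) * \<epsilon>1"
    using mult_left_mono[OF h_le C_nonneg] by simp
  moreover have "C / (\<beta> * \<sigma>) * \<epsilon>1 \<le> \<epsilon>1"
  proof -
    have "C / (\<beta> * \<sigma>) \<le> 1"
      using \<open>\<beta> * \<sigma> > C\<close> \<open>\<beta> * \<sigma> > 1\<close> by (simp add: divide_le_eq)
    then show ?thesis
      using mult_right_mono[OF _ eps] by fastforce
  qed
  ultimately show ?thesis
    using gradM_bound \<open>x \<in> fullrank_set h\<close>
    by (simp add: approx_crit_def algebra_simps \<sigma>_def C_def)
qed

end
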